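(* Let $\alpha\in\mathbb{Q}(i)\setminus\mathbb{R}$ with $|\alpha|>1$, with minimal primitive polynomial $P_\alpha(X)=a_2X^2+a_1X+a_0$ ($a_0,a_1,a_2\in\mathbb{Z}$ coprime, $a_2>0$, $P_\alpha(\alpha)=0$), and $\mathcal{D}=\{0,\ldots,|a_0|-1\}$. Write $\alpha=\frac{num(\alpha)}{den(\alpha)}$ with $num(\alpha),den(\alpha)\in\mathbb{Z}[i]$ having no common Gaussian prime divisor. Let $x\in\mathbb{C}$, $k\in\mathbb{Z}$, and $(d_j)_{j\le k}$ a sequence in $\mathcal{D}$ with $d_k\ne0$ such that $x=\sum_{j\le k}d_j\alpha^j$ in $\mathbb{C}$. Then this series is an $\alpha$-expansion of $x$ if and only if it converges to $0$ in $K_p$ for every Gaussian prime $p$ dividing $den(\alpha)$.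
   Context: Let $\Lambda_\alpha=\mathbb{Z}[\alpha]\cap\alpha^{-1}\mathbb{Z}[\alpha^{-1}]$. An $\alpha$-expansion of $x$ is a representation $x=\sum_{j\le k}d_j\alpha^j$ with $d_j\in\mathcal{D}$, $d_k\ne0$, such that for every $l\le k$, $\sum_{j=l}^k d_j\alpha^{j-l}\in\Lambda_\alpha$. For a Gaussian prime $p$, $\nu_p:\mathbb{Q}(i)\to\mathbb{Z}\cup\{\infty\}$ is the exponent of $p$ in the (unique up to units and associates) factorization of a nonzero element into Gaussian primes, $\nu_p(0)=\infty$; the $p$-adic absolute value is $|x|_p=N(p)^{-\nu_p(x)}$ with $N(p)$ the norm of $p$, and $K_p$ is the completion of $\mathbb{Q}(i)$ with respect to $|\cdot|_p$. *)

theory Defs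
  imports Complex_Main
begin

definition gauss_int :: "complex \<Rightarrow> bool" where
  "gauss_int z \<longleftrightarrow> Re z \<in> \<int> \<and> Im z \<in> \<int>"

definition gauss_rat :: "complex \<Rightarrow> bool" where
  "gauss_rat z \<longleftrightarrow> Re z \<in> \<rat> \<and> Im z \<in> \<rat>"

definition gdvd :: "complex \<Rightarrow> complex \<Rightarrow> bool" where
  "gdvd a b \<longleftrightarrow> (\<exists>c. gauss_int c \<and> b = a * c)"

definition gauss_prime :: "complex \<Rightarrow> bool" where
  "gauss_prime p \<longleftrightarrow> gauss_int p \<and> p \<noteq> 0 \<and> \<not> gdvd p 1 \<and>
     (\<forall>a b. gauss_int a \<longrightarrow> gauss_int b \<longrightarrow> gdvd p (a * b) \<longrightarrow> gdvd p a \<or> gdvd p b)"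

definition gauss_val :: "complex \<Rightarrow> complex \<Rightarrow> int" where
  "gauss_val p x = (THE n::int. \<exists>u v. gauss_int u \<and> gauss_int v \<and>
      \<not> gdvd p u \<and> \<not> gdvd p v \<and> x = p powi n * u / v)"

definition padic_abs :: "complex \<Rightarrow> complex \<Rightarrow> real" where
  "padic_abs p x = (if x = 0 then 0 else (cmod p)\<^sup>2 powr (- real_of_int (gauss_val p x)))"

definition Zring :: "complex \<Rightarrow> complex set" where
  "Zring a = {z. \<exists>(c::nat \<Rightarrow> int) n. z = (\<Sum>i<n. of_int (c i) * a ^ i)}"

definition Lambda :: "complex \<Rightarrow> complex set" where
  "Lambda a = Zring a \<inter> (\<lambda>z. inverse a * z) ` Zring (inverse a)"

definition alpha_expansion :: "complex \<Rightarrow> int set \<Rightarrow> (int \<Rightarrow> int) \<Rightarrow> int \<Rightarrow> complex \<Rightarrow> bool" where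
  "alpha_expansion a D d k x \<longleftrightarrow>
     (\<forall>j\<le>k. d j \<in> D) \<and> d k \<noteq> 0 \<and>
     (\<lambda>n::nat. of_int (d (k - int n)) * a powi (k - int n)) sums x \<and>
     (\<forall>l\<le>k. (\<Sum>j\<in>{l..k}. of_int (d j) * a powi (j - l)) \<in> Lambda a)"

end

theory Submission
  imports Defs
begin

text \<open>
  Write \<open>Y N = \<Sum>j=k-N..k. d j * \<alpha>^(j-k+N)\<close> for the integer parts of the expansion; they all
  lie in \<open>\<int>[\<alpha>]\<close>, and the tail \<open>\<Sum>j=l..k. d j * \<alpha>^j\<close> equals \<open>\<alpha>^l * Y (k-l)\<close>. If the
  Gaussian prime \<open>q\<close> divides \<open>den\<close> exactly \<open>e\<close> times, then \<open>\<nu>_q(\<alpha>) = -e\<close>, so the tails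
  tend to \<open>0\<close> in \<open>K_q\<close> iff \<open>\<nu>_q(Y N) \<ge> e\<close> for all \<open>N\<close>; membership in
  \<open>\<alpha>\<^sup>-\<^sup>1\<int>[\<alpha>\<^sup>-\<^sup>1]\<close> forces exactly this.

  Conversely, \<open>Y N = a2 W (N+1) + (a1 + a2 \<alpha>) W N\<close> with rationals \<open>W n\<close> given by a linear
  recurrence, and \<open>\<alpha> Y N\<close> is an integer combination of \<open>1\<close> and \<open>\<alpha>\<^sup>-\<^sup>1\<close> as soon as all
  \<open>W n\<close> are integers. A Gaussian prime \<open>p\<close> at which some \<open>W n\<close> has a pole is impossible: if
  \<open>p\<close> does not divide \<open>a2\<close>, the recurrence preserves \<open>p\<close>-integrality; if \<open>p\<close> divides \<open>a2\<close> but not \<open>a1\<close>,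
  then \<open>\<alpha>\<close> or its conjugate has a pole at \<open>p\<close>, and the first pole of \<open>W\<close> produces an integer
  part of valuation below \<open>e\<close>; if \<open>p\<close> divides \<open>a1\<close> and \<open>a2\<close>, then \<open>W N\<close> is
  \<open>(Y N - cnj (Y N)) / (a2 (\<alpha> - cnj \<alpha>))\<close>, whose poles are bounded, and the recurrence run
  backwards, which divides by the \<open>p\<close>-unit \<open>a0\<close>, removes them.
\<close>

section \<open>Gaussian integers\<close>

lemma gauss_int_add [simp]: "gauss_int a \<Longrightarrow> gauss_int b \<Longrightarrow> gauss_int (a + b)"
  and gauss_int_diff [simp]: "gauss_int a \<Longrightarrow> gauss_int b \<Longrightarrow> gauss_int (a - b)"
  and gauss_int_minus [simp]: "gauss_int a \<Longrightarrow> gauss_int (- a)"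
  and gauss_int_mult [simp]: "gauss_int a \<Longrightarrow> gauss_int b \<Longrightarrow> gauss_int (a * b)"
  and gauss_int_cnj_iff [simp]: "gauss_int (cnj a) \<longleftrightarrow> gauss_int a"
  and gauss_int_of_int [simp]: "gauss_int (of_int n)"
  and gauss_int_0 [simp]: "gauss_int 0"
  and gauss_int_1 [simp]: "gauss_int 1"
  unfolding gauss_int_def by auto

lemma gauss_int_cnj: "gauss_int a \<Longrightarrow> gauss_int (cnj a)"
  by simp

lemma gauss_int_power [simp]: "gauss_int a \<Longrightarrow> gauss_int (a ^ n)"
  by (induction n) auto

definition gauss_norm :: "complex \<Rightarrow> real" where
  "gauss_norm z = (cmod z)\<^sup>2"

lemma gauss_norm_mult: "gauss_norm (a * b) = gauss_norm a * gauss_norm b"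
  by (simp add: gauss_norm_def norm_mult power_mult_distrib)

lemma gauss_norm_eq_0_iff [simp]: "gauss_norm z = 0 \<longleftrightarrow> z = 0"
  by (simp add: gauss_norm_def)

lemma gauss_norm_0 [simp]: "gauss_norm 0 = 0"
  by (simp add: gauss_norm_def)

lemma gauss_norm_nonneg: "gauss_norm z \<ge> 0"
  by (simp add: gauss_norm_def)

lemma mult_cnj_eq_gauss_norm: "z * cnj z = complex_of_real (gauss_norm z)"
  unfolding gauss_norm_def by (rule complex_norm_square[symmetric])

lemma gauss_norm_of_nat: "gauss_int z \<Longrightarrow> \<exists>n::nat. gauss_norm z = of_nat n"
proof -
  assume "gauss_int z"
  then obtain a b :: int where "Re z = a" "Im z = b"
    unfolding gauss_int_def by (metis Ints_cases)
  then have "gauss_norm z = of_int (a\<^sup>2 + b\<^sup>2)"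
    by (simp add: gauss_norm_def cmod_power2)
  then show ?thesis
    by (metis of_int_of_nat_eq sum_power2_ge_zero zero_le_imp_eq_int)
qed

lemma gauss_norm_ge_1: "gauss_int z \<Longrightarrow> z \<noteq> 0 \<Longrightarrow> gauss_norm z \<ge> 1"
  by (metis gauss_norm_eq_0_iff gauss_norm_of_nat of_nat_0 of_nat_1 of_nat_mono
      less_one not_less)

lemma gdvd_refl [simp]: "gdvd a a"
  and gdvd_0 [simp]: "gdvd a 0"
  unfolding gdvd_def by (metis gauss_int_1 mult_1_right, metis gauss_int_0 mult_zero_right)

lemma gdvd_trans: "gdvd a b \<Longrightarrow> gdvd b c \<Longrightarrow> gdvd a c"
  unfolding gdvd_def by (metis gauss_int_mult mult.assoc)

lemma gdvd_mult_right: "gdvd a b \<Longrightarrow> gauss_int c \<Longrightarrow> gdvd a (b * c)"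
  unfolding gdvd_def by (metis gauss_int_mult mult.assoc)

lemma gdvd_mult_left: "gdvd a b \<Longrightarrow> gauss_int c \<Longrightarrow> gdvd a (c * b)"
  using gdvd_mult_right by (simp add: mult.commute)

lemma gdvd_triv_left: "gauss_int c \<Longrightarrow> gdvd a (a * c)"
  unfolding gdvd_def by auto

lemma gdvd_add: "gdvd a b \<Longrightarrow> gdvd a c \<Longrightarrow> gdvd a (b + c)"
  unfolding gdvd_def by (metis distrib_left gauss_int_add)

lemma gdvd_of_int_gcd: "gdvd p (of_int a) \<Longrightarrow> gdvd p (of_int b) \<Longrightarrow> gdvd p (of_int (gcd a b))"
proof -
  assume "gdvd p (of_int a)" "gdvd p (of_int b)"
  moreover obtain u v where "u * a + v * b = gcd a b"
    using bezout_int by blast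
  then have "of_int (gcd a b) = of_int u * of_int a + of_int v * (of_int b :: complex)"
    by (metis of_int_add of_int_mult)
  ultimately show ?thesis
    by (simp add: gdvd_add gdvd_mult_left)
qed

lemma gdvd_cnj_iff [simp]: "gdvd (cnj a) (cnj b) \<longleftrightarrow> gdvd a b"
proof -
  have "gdvd (cnj a) (cnj b)" if "gdvd a b" for a b
    using that unfolding gdvd_def by (metis complex_cnj_mult gauss_int_cnj)
  then show ?thesis
    by (metis complex_cnj_cnj)
qed

lemma gdvd_one_iff_gauss_norm: "gauss_int p \<Longrightarrow> gdvd p 1 \<longleftrightarrow> gauss_norm p = 1"
proof
  assume p: "gauss_int p" and "gdvd p 1"
  then obtain c where c: "gauss_int c" "1 = p * c"
    unfolding gdvd_def by auto
  then have "gauss_norm p * gauss_norm c = 1"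
    by (metis gauss_norm_mult gauss_norm_def norm_one power_one)
  moreover obtain m n :: nat where "gauss_norm p = m" "gauss_norm c = n"
    using p c gauss_norm_of_nat by metis
  ultimately show "gauss_norm p = 1"
    by (metis of_nat_1 of_nat_eq_iff of_nat_mult nat_mult_eq_1_iff)
next
  assume "gauss_int p" "gauss_norm p = 1"
  then show "gdvd p 1"
    unfolding gdvd_def by (metis gauss_int_cnj mult_cnj_eq_gauss_norm of_real_1)
qed

lemma gdvd_gauss_norm_le: "gdvd a z \<Longrightarrow> z \<noteq> 0 \<Longrightarrow> gauss_norm a \<le> gauss_norm z"
proof -
  assume "gdvd a z" "z \<noteq> 0"
  then obtain c where c: "gauss_int c" "c \<noteq> 0" "z = a * c"
    unfolding gdvd_def by auto
  then have "gauss_norm c \<ge> 1"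
    using gauss_norm_ge_1 by auto
  then have "gauss_norm a * 1 \<le> gauss_norm a * gauss_norm c"
    using gauss_norm_nonneg[of a] by (rule mult_left_mono)
  then show ?thesis
    using c(3) by (simp add: gauss_norm_mult)
qed

text \<open>Rounding the real and imaginary parts of \<open>a / b\<close> leaves an error of norm at most \<open>1/2\<close>.\<close>
lemma gauss_div_mod:
  assumes a: "gauss_int a" and b: "gauss_int b" and b0: "b \<noteq> 0"
  obtains q r where "gauss_int q" "gauss_int r" "a = q * b + r" "gauss_norm r < gauss_norm b"
proof
  define x where "x = a / b"
  define q where "q = Complex (of_int (round (Re x))) (of_int (round (Im x)))"
  show "gauss_int q"
    unfolding q_def gauss_int_def by simp
  then show "gauss_int (a - q * b)"
    using a b by auto
  show "a = q * b + (a - q * b)"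
    by simp
  have "\<bar>Re x - Re q\<bar> \<le> \<bar>1/2\<bar>" "\<bar>Im x - Im q\<bar> \<le> \<bar>1/2\<bar>"
    unfolding q_def using of_int_round_abs_le[of "Re x"] of_int_round_abs_le[of "Im x"]
    by (simp_all add: abs_minus_commute)
  then have "(Re x - Re q)\<^sup>2 \<le> (1/2)\<^sup>2" "(Im x - Im q)\<^sup>2 \<le> (1/2)\<^sup>2"
    by (simp_all only: abs_le_square_iff)
  then have "gauss_norm (x - q) \<le> 1/2"
    unfolding gauss_norm_def cmod_power2 by (simp add: power2_eq_square)
  moreover have "a - q * b = b * (x - q)"
    unfolding x_def using b0 by (simp add: field_simps)
  moreover have "gauss_norm b > 0"
    using b0 gauss_norm_nonneg[of b] gauss_norm_eq_0_iff[of b] by linarith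
  ultimately show "gauss_norm (a - q * b) < gauss_norm b"
    by (simp add: gauss_norm_mult)
qed

text \<open>A nonzero element of minimal norm in the ideal generated by \<open>a\<close> and \<open>b\<close> divides both.\<close>
lemma gauss_bezout:
  assumes a: "gauss_int a" and b: "gauss_int b" and a0: "a \<noteq> 0"
  obtains g x y where "gauss_int x" "gauss_int y" "g = a * x + b * y" "g \<noteq> 0"
    "gdvd g a" "gdvd g b"
proof -
  define comb where "comb n \<longleftrightarrow> (\<exists>x y. gauss_int x \<and> gauss_int y \<and> a * x + b * y \<noteq> 0 \<and>
    gauss_norm (a * x + b * y) = of_nat n)" for n
  obtain n0 where "gauss_norm a = of_nat n0"
    using gauss_norm_of_nat a by blast
  then have "comb n0"
    unfolding comb_def using a0 by (intro exI[of _ 1] exI[of _ 0]) auto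
  then obtain n where "comb n" and n_min: "\<And>m. comb m \<Longrightarrow> n \<le> m"
    using ex_has_least_nat[of comb n0 id] by auto
  then obtain x y where xy: "gauss_int x" "gauss_int y" "a * x + b * y \<noteq> 0"
    "gauss_norm (a * x + b * y) = of_nat n"
    unfolding comb_def by auto
  define g where "g = a * x + b * y"
  have g: "gauss_int g" "g \<noteq> 0"
    unfolding g_def using xy(1-3) a b by (blast intro: gauss_int_add gauss_int_mult)+
  have divides: "gdvd g (a * s + b * t)" if "gauss_int s" "gauss_int t" for s t
  proof -
    have "gauss_int (a * s + b * t)"
      using that a b by auto
    then obtain q r where qr: "gauss_int q" "gauss_int r" "a * s + b * t = q * g + r"
      "gauss_norm r < gauss_norm g"
      using gauss_div_mod g by metis
    have "r = a * (s - q * x) + b * (t - q * y)"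
      using qr(3) unfolding g_def by (simp add: algebra_simps)
    moreover have "gauss_int (s - q * x)" "gauss_int (t - q * y)"
      using that qr xy by auto
    moreover obtain m where m: "gauss_norm r = of_nat m"
      using gauss_norm_of_nat qr(2) by blast
    ultimately have "r \<noteq> 0 \<Longrightarrow> comb m"
      unfolding comb_def by blast
    then have "r \<noteq> 0 \<Longrightarrow> n \<le> m"
      using n_min by blast
    then have "r = 0"
      using qr(4) xy(4) m unfolding g_def by fastforce
    then show ?thesis
      using qr(1,3) unfolding gdvd_def by (metis add_0_right mult.commute)
  qed
  have "gdvd g a" "gdvd g b"
    using divides[of 1 0] divides[of 0 1] by simp_all
  then show ?thesis
    using that xy(1,2) g(2) g_def by blast
qed

lemma gauss_prime_if_no_proper_divisor:
  assumes z: "gauss_int z" "gauss_norm z > 1"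
    and no_div: "\<And>d. gauss_int d \<Longrightarrow> gdvd d z \<Longrightarrow> gauss_norm d \<le> 1 \<or> gauss_norm d \<ge> gauss_norm z"
  shows "gauss_prime z"
  unfolding gauss_prime_def
proof (intro conjI allI impI)
  show z0: "z \<noteq> 0" and "\<not> gdvd z 1"
    using z gdvd_one_iff_gauss_norm by auto
  fix a b
  assume a: "gauss_int a" and b: "gauss_int b" and zab: "gdvd z (a * b)"
  have "gdvd z b" if za: "\<not> gdvd z a"
  proof -
    obtain g x y where g: "gauss_int x" "gauss_int y" "g = z * x + a * y" "g \<noteq> 0"
      "gdvd g z" "gdvd g a"
      using gauss_bezout[OF z(1) a z0] by metis
    have gint: "gauss_int g"
      using g a z by auto
    have "gauss_norm g = 1"
    proof (rule ccontr)
      assume "gauss_norm g \<noteq> 1"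
      then have "gauss_norm g = gauss_norm z"
        using no_div[OF gint g(5)] gdvd_gauss_norm_le[OF g(5) z0] gauss_norm_ge_1[OF gint g(4)]
        by linarith
      moreover obtain c where c: "gauss_int c" "z = g * c"
        using g(5) unfolding gdvd_def by auto
      ultimately have "gdvd c 1"
        using gdvd_one_iff_gauss_norm g(4) by (metis gauss_norm_mult gauss_norm_eq_0_iff mult_cancel_left1)
      then have "gdvd z g"
        using c unfolding gdvd_def by (metis mult.assoc mult.right_neutral)
      then show False
        using za g(6) gdvd_trans by blast
    qed
    then have "b = (z * x + a * y) * cnj g * b"
      using g(3) mult_cnj_eq_gauss_norm[of g] by simp
    also have "\<dots> = z * (x * cnj g * b) + (a * b) * (y * cnj g)"
      by (simp add: algebra_simps)
    finally have "b = z * (x * cnj g * b) + (a * b) * (y * cnj g)" .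
    then show "gdvd z b"
      by (metis gdvd_add gdvd_triv_left gdvd_mult_right zab gauss_int_mult gauss_int_cnj g(1,2) gint b)
  qed
  then show "gdvd z a \<or> gdvd z b"
    by blast
qed (use z in auto)

lemma gauss_prime_divisor_exists:
  "gauss_int z \<Longrightarrow> gauss_norm z > 1 \<Longrightarrow> \<exists>p. gauss_prime p \<and> gdvd p z"
proof (induction "nat \<lfloor>gauss_norm z\<rfloor>" arbitrary: z rule: less_induct)
  case less
  show ?case
  proof (cases "\<exists>d. gauss_int d \<and> gdvd d z \<and> 1 < gauss_norm d \<and> gauss_norm d < gauss_norm z")
    case True
    then obtain d where d: "gauss_int d" "gdvd d z" "1 < gauss_norm d" "gauss_norm d < gauss_norm z"
      by auto
    obtain nd nz :: nat where "gauss_norm d = nd" "gauss_norm z = nz"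
      using gauss_norm_of_nat d(1) less.prems(1) by metis
    then have "nat \<lfloor>gauss_norm d\<rfloor> < nat \<lfloor>gauss_norm z\<rfloor>"
      using d(4) by simp
    then obtain p where "gauss_prime p" "gdvd p d"
      using less.hyps d(1,3) by blast
    then show ?thesis
      using d(2) gdvd_trans by blast
  next
    case False
    then have "gauss_prime z"
      using less.prems by (intro gauss_prime_if_no_proper_divisor) (auto simp: not_less)
    then show ?thesis
      using gdvd_refl by blast
  qed
qed

lemma gauss_norm_prime_ge_2: "gauss_prime p \<Longrightarrow> gauss_norm p \<ge> 2"
proof -
  assume "gauss_prime p"
  then have p: "gauss_int p" "p \<noteq> 0" "\<not> gdvd p 1"
    unfolding gauss_prime_def by auto
  obtain n :: nat where n: "gauss_norm p = n"
    using gauss_norm_of_nat p by blast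
  have "n \<noteq> 0"
    using n p(2) by (metis gauss_norm_eq_0_iff of_nat_0)
  moreover have "n \<noteq> 1"
    using n p gdvd_one_iff_gauss_norm by simp
  ultimately show ?thesis
    using n by simp
qed

lemma gauss_prime_cnj: "gauss_prime p \<Longrightarrow> gauss_prime (cnj p)"
  unfolding gauss_prime_def
proof (elim conjE, intro conjI allI impI)
  fix a b
  assume prime: "\<forall>a b. gauss_int a \<longrightarrow> gauss_int b \<longrightarrow> gdvd p (a * b) \<longrightarrow> gdvd p a \<or> gdvd p b"
    and "gauss_int a" "gauss_int b" "gdvd (cnj p) (a * b)"
  then have "gdvd p (cnj a) \<or> gdvd p (cnj b)"
    using gdvd_cnj_iff[of p "cnj a * cnj b"] by simp
  then show "gdvd (cnj p) a \<or> gdvd (cnj p) b"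
    using gdvd_cnj_iff[of "cnj p"] by simp
qed (use gdvd_cnj_iff[of p 1] in auto)

lemma complex_of_rat_eq: "(of_rat r :: complex) = complex_of_real (of_rat r)"
  by (cases r) (simp add: of_rat_rat)

lemma cnj_of_rat [simp]: "cnj (of_rat r :: complex) = of_rat r"
  by (simp add: complex_of_rat_eq)

lemma gauss_rat_add [simp]: "gauss_rat a \<Longrightarrow> gauss_rat b \<Longrightarrow> gauss_rat (a + b)"
  and gauss_rat_diff [simp]: "gauss_rat a \<Longrightarrow> gauss_rat b \<Longrightarrow> gauss_rat (a - b)"
  and gauss_rat_mult [simp]: "gauss_rat a \<Longrightarrow> gauss_rat b \<Longrightarrow> gauss_rat (a * b)"
  and gauss_rat_cnj [simp]: "gauss_rat a \<Longrightarrow> gauss_rat (cnj a)"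
  and gauss_rat_inverse [simp]: "gauss_rat a \<Longrightarrow> gauss_rat (inverse a)"
  and gauss_rat_of_int [simp]: "gauss_rat (of_int n)"
  and gauss_rat_of_rat [simp]: "gauss_rat (of_rat r)"
  unfolding gauss_rat_def by (auto simp: power2_eq_square complex_of_rat_eq)

lemma gauss_rat_power [simp]: "gauss_rat a \<Longrightarrow> gauss_rat (a ^ n)"
  by (induction n) (auto simp: gauss_rat_def)

lemma gauss_rat_powi [simp]: "gauss_rat a \<Longrightarrow> gauss_rat (a powi n)"
  unfolding power_int_def by auto

lemma gauss_rat_sum: "(\<And>i. i \<in> A \<Longrightarrow> gauss_rat (f i)) \<Longrightarrow> gauss_rat (sum f A)"
  by (induction A rule: infinite_finite_induct) (auto simp: gauss_rat_def)

lemma gauss_rat_imp_gauss_int_multiple: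
  assumes "gauss_rat x"
  obtains n :: int where "n > 0" "gauss_int (of_int n * x)"
proof -
  obtain a b :: int where ab: "b > 0" "Re x = of_int a / of_int b"
    using assms unfolding gauss_rat_def by (meson Rats_cases')
  obtain c d :: int where cd: "d > 0" "Im x = of_int c / of_int d"
    using assms unfolding gauss_rat_def by (meson Rats_cases')
  have "Re (of_int (b * d) * x) = of_int (a * d)" "Im (of_int (b * d) * x) = of_int (c * b)"
    using ab cd by (simp_all add: field_simps)
  then have "gauss_int (of_int (b * d) * x)"
    unfolding gauss_int_def by (metis Ints_of_int)
  moreover have "b * d > 0"
    using ab cd by simp
  ultimately show ?thesis
    using that by blast
qed

section \<open>Valuations at a Gaussian prime\<close>

definition val_ge :: "complex \<Rightarrow> int \<Rightarrow> complex \<Rightarrow> bool" where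
  "val_ge p m x \<longleftrightarrow> (\<exists>u v. gauss_int u \<and> gauss_int v \<and> \<not> gdvd p v \<and> x = p powi m * u / v)"

definition has_val :: "complex \<Rightarrow> int \<Rightarrow> complex \<Rightarrow> bool" where
  "has_val p m x \<longleftrightarrow>
     (\<exists>u v. gauss_int u \<and> gauss_int v \<and> \<not> gdvd p u \<and> \<not> gdvd p v \<and> x = p powi m * u / v)"

lemma val_geI: "gauss_int u \<Longrightarrow> gauss_int v \<Longrightarrow> \<not> gdvd p v \<Longrightarrow> x = p powi m * u / v \<Longrightarrow> val_ge p m x"
  unfolding val_ge_def by blast

lemma has_valI:
  "gauss_int u \<Longrightarrow> gauss_int v \<Longrightarrow> \<not> gdvd p u \<Longrightarrow> \<not> gdvd p v \<Longrightarrow> x = p powi m * u / v \<Longrightarrow> has_val p m x"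
  unfolding has_val_def by blast

lemma has_val_imp_val_ge: "has_val p m x \<Longrightarrow> val_ge p m x"
  unfolding has_val_def val_ge_def by blast

lemma val_ge_cnj_iff: "val_ge (cnj p) m (cnj x) \<longleftrightarrow> val_ge p m x"
proof -
  have cnj: "val_ge (cnj p) m (cnj x)" if x: "val_ge p m x" for p x
  proof -
    obtain u v where "gauss_int u" "gauss_int v" "\<not> gdvd p v" "x = p powi m * u / v"
      using x unfolding val_ge_def by blast
    then show ?thesis
      by (intro val_geI[of "cnj u" "cnj v"]) auto
  qed
  show ?thesis
    using cnj[of p x] cnj[of "cnj p" "cnj x"] by auto
qed

context
  fixes p :: complex
  assumes p: "gauss_prime p"
begin

lemma gauss_prime_nonzero: "p \<noteq> 0"
  and gauss_prime_not_unit: "\<not> gdvd p 1"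
  and gauss_prime_gauss_int: "gauss_int p"
  using p unfolding gauss_prime_def by auto

lemma not_gdvd_mult:
  "gauss_int a \<Longrightarrow> gauss_int b \<Longrightarrow> \<not> gdvd p a \<Longrightarrow> \<not> gdvd p b \<Longrightarrow> \<not> gdvd p (a * b)"
  using p unfolding gauss_prime_def by blast

lemma not_gdvd_nonzero: "\<not> gdvd p v \<Longrightarrow> v \<noteq> 0"
  by auto

lemma val_ge_0 [simp]: "val_ge p m 0"
  using gauss_prime_not_unit by (intro val_geI[of 0 1]) auto

lemma val_ge_0_gauss_int: "gauss_int z \<Longrightarrow> val_ge p 0 z"
  using gauss_prime_not_unit by (intro val_geI[of z 1]) auto

lemma val_ge_of_int [simp]: "val_ge p 0 (of_int n)"
  by (simp add: val_ge_0_gauss_int)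

lemma has_val_0_of_not_gdvd: "gauss_int z \<Longrightarrow> \<not> gdvd p z \<Longrightarrow> has_val p 0 z"
  using gauss_prime_not_unit by (intro has_valI[of z 1]) auto

lemma val_ge_add: "val_ge p m x \<Longrightarrow> val_ge p m y \<Longrightarrow> val_ge p m (x + y)"
proof -
  assume "val_ge p m x" "val_ge p m y"
  then obtain u v u' v' where
    x: "gauss_int u" "gauss_int v" "\<not> gdvd p v" "x = p powi m * u / v" and
    y: "gauss_int u'" "gauss_int v'" "\<not> gdvd p v'" "y = p powi m * u' / v'"
    unfolding val_ge_def by blast
  have "x + y = p powi m * (u * v' + u' * v) / (v * v')"
    using x y by (simp add: not_gdvd_nonzero field_simps)
  then show ?thesis
    using x y not_gdvd_mult by (intro val_geI[of "u * v' + u' * v" "v * v'"]) auto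
qed

lemma val_ge_uminus: "val_ge p m x \<Longrightarrow> val_ge p m (- x)"
  unfolding val_ge_def by (metis gauss_int_minus minus_divide_left mult_minus_right)

lemma val_ge_diff: "val_ge p m x \<Longrightarrow> val_ge p m y \<Longrightarrow> val_ge p m (x - y)"
  using val_ge_add[of m x "- y"] val_ge_uminus by simp

lemma val_ge_mult: "val_ge p m x \<Longrightarrow> val_ge p n y \<Longrightarrow> val_ge p (m + n) (x * y)"
proof -
  assume "val_ge p m x" "val_ge p n y"
  then obtain u v u' v' where
    x: "gauss_int u" "gauss_int v" "\<not> gdvd p v" "x = p powi m * u / v" and
    y: "gauss_int u'" "gauss_int v'" "\<not> gdvd p v'" "y = p powi n * u' / v'"
    unfolding val_ge_def by blast
  have "x * y = p powi (m + n) * (u * u') / (v * v')"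
    using x y gauss_prime_nonzero by (simp add: power_int_add)
  then show ?thesis
    using x y not_gdvd_mult by (intro val_geI[of "u * u'" "v * v'"]) auto
qed

lemma val_ge_mono: "n \<le> m \<Longrightarrow> val_ge p m x \<Longrightarrow> val_ge p n x"
proof -
  assume nm: "n \<le> m" and "val_ge p m x"
  then obtain u v where x: "gauss_int u" "gauss_int v" "\<not> gdvd p v" "x = p powi m * u / v"
    unfolding val_ge_def by blast
  have "p powi m = p powi n * p ^ nat (m - n)"
    using nm gauss_prime_nonzero by (metis add_diff_cancel_left' le_add_diff_inverse power_int_add
        power_int_of_nat int_nat_eq diff_ge_0_iff_ge)
  then have "x = p powi n * (p ^ nat (m - n) * u) / v"
    using x by simp
  then show ?thesis
    using x gauss_prime_gauss_int by (intro val_geI[of "p ^ nat (m - n) * u" v]) auto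
qed

lemma val_ge_sum: "(\<And>i. i \<in> A \<Longrightarrow> val_ge p m (f i)) \<Longrightarrow> val_ge p m (sum f A)"
  by (induction A rule: infinite_finite_induct) (auto intro: val_ge_add)

lemma val_ge_power: "val_ge p m x \<Longrightarrow> val_ge p (m * int n) (x ^ n)"
proof (induction n)
  case 0
  then show ?case
    using val_ge_0_gauss_int[of 1] by simp
next
  case (Suc n)
  then show ?case
    using val_ge_mult[of m x "m * int n" "x ^ n"] by (simp add: algebra_simps)
qed

lemma val_ge_1_iff_gdvd: "gauss_int z \<Longrightarrow> val_ge p 1 z \<longleftrightarrow> gdvd p z"
proof
  assume z: "gauss_int z" and "val_ge p 1 z"
  then obtain u v where uv: "gauss_int u" "gauss_int v" "\<not> gdvd p v" "z = p * u / v"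
    unfolding val_ge_def by auto
  then have "z * v = p * u"
    by (simp add: not_gdvd_nonzero)
  then have "gdvd p (z * v)"
    using uv gdvd_triv_left by metis
  then show "gdvd p z"
    using p z uv unfolding gauss_prime_def by blast
next
  assume "gauss_int z" "gdvd p z"
  then obtain c where "gauss_int c" "z = p * c"
    unfolding gdvd_def by auto
  then show "val_ge p 1 z"
    using gauss_prime_not_unit by (intro val_geI[of c 1]) auto
qed

lemma has_val_nonzero: "has_val p m x \<Longrightarrow> x \<noteq> 0"
  unfolding has_val_def using gauss_prime_nonzero by auto

lemma has_val_not_val_ge_Suc: "has_val p m x \<Longrightarrow> \<not> val_ge p (m + 1) x"
proof
  assume "has_val p m x" "val_ge p (m + 1) x"
  then obtain u v u' v' where
    a: "gauss_int u" "gauss_int v" "\<not> gdvd p u" "\<not> gdvd p v" "x = p powi m * u / v" and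
    b: "gauss_int u'" "gauss_int v'" "\<not> gdvd p v'" "x = p powi (m + 1) * u' / v'"
    unfolding val_ge_def has_val_def by blast
  then have "p powi m * u / v = p powi m * p * u' / v'"
    using gauss_prime_nonzero by (simp add: power_int_add)
  then have "u * v' = p * (u' * v)"
    using gauss_prime_nonzero not_gdvd_nonzero[OF a(4)] not_gdvd_nonzero[OF b(3)]
    by (simp add: field_simps)
  then have "gdvd p (u * v')"
    using a b gdvd_triv_left by (metis gauss_int_mult)
  then show False
    using not_gdvd_mult a b by blast
qed

lemma has_val_if_not_val_ge_Suc: "val_ge p m x \<Longrightarrow> \<not> val_ge p (m + 1) x \<Longrightarrow> has_val p m x"
proof -
  assume "val_ge p m x" and not_ge: "\<not> val_ge p (m + 1) x"
  then obtain u v where uv: "gauss_int u" "gauss_int v" "\<not> gdvd p v" "x = p powi m * u / v"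
    unfolding val_ge_def by blast
  have "\<not> gdvd p u"
  proof
    assume "gdvd p u"
    then obtain c where "gauss_int c" "u = p * c"
      unfolding gdvd_def by auto
    then have "val_ge p (m + 1) x"
      using uv gauss_prime_nonzero by (intro val_geI[of c v]) (auto simp: power_int_add)
    then show False
      using not_ge by simp
  qed
  then show ?thesis
    using uv by (intro has_valI[of u v]) auto
qed

lemma has_val_le: "has_val p m x \<Longrightarrow> val_ge p n x \<Longrightarrow> n \<le> m"
  using has_val_not_val_ge_Suc val_ge_mono[of "m + 1" n x] by force

lemma has_val_unique: "has_val p m x \<Longrightarrow> has_val p n x \<Longrightarrow> m = n"
  using has_val_le has_val_imp_val_ge by (metis order_antisym)

lemma has_val_add_val_ge: "has_val p m x \<Longrightarrow> val_ge p (m + 1) y \<Longrightarrow> has_val p m (x + y)"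
proof (rule has_val_if_not_val_ge_Suc)
  assume x: "has_val p m x" and y: "val_ge p (m + 1) y"
  show "val_ge p m (x + y)"
    using x y val_ge_mono[of m "m + 1" y] by (simp add: val_ge_add has_val_imp_val_ge)
  show "\<not> val_ge p (m + 1) (x + y)"
    using val_ge_diff[OF _ y, of "x + y"] has_val_not_val_ge_Suc[OF x] by auto
qed

lemma has_val_mult: "has_val p m x \<Longrightarrow> has_val p n y \<Longrightarrow> has_val p (m + n) (x * y)"
proof -
  assume "has_val p m x" "has_val p n y"
  then obtain u v u' v' where
    x: "gauss_int u" "gauss_int v" "\<not> gdvd p u" "\<not> gdvd p v" "x = p powi m * u / v" and
    y: "gauss_int u'" "gauss_int v'" "\<not> gdvd p u'" "\<not> gdvd p v'" "y = p powi n * u' / v'"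
    unfolding has_val_def by blast
  have "x * y = p powi (m + n) * (u * u') / (v * v')"
    using x y gauss_prime_nonzero by (simp add: power_int_add)
  then show ?thesis
    using x y not_gdvd_mult by (intro has_valI[of "u * u'" "v * v'"]) auto
qed

lemma has_val_inverse: "has_val p m x \<Longrightarrow> has_val p (- m) (inverse x)"
proof -
  assume "has_val p m x"
  then obtain u v where x: "gauss_int u" "gauss_int v" "\<not> gdvd p u" "\<not> gdvd p v" "x = p powi m * u / v"
    unfolding has_val_def by blast
  then have "inverse x = p powi (- m) * v / u"
    using gauss_prime_nonzero by (simp add: power_int_minus field_simps)
  then show ?thesis
    using x by (intro has_valI[of v u]) auto
qed

lemma has_val_divide: "has_val p m x \<Longrightarrow> has_val p n y \<Longrightarrow> has_val p (m - n) (x / y)"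
  using has_val_mult[of m x "- n" "inverse y"] has_val_inverse by (simp add: divide_inverse)

lemma val_ge_divide: "val_ge p m x \<Longrightarrow> has_val p n y \<Longrightarrow> val_ge p (m - n) (x / y)"
  using val_ge_mult[of m x "- n" "inverse y"] has_val_inverse has_val_imp_val_ge
  by (simp add: divide_inverse)

lemma has_val_uminus: "has_val p m x \<Longrightarrow> has_val p m (- x)"
  unfolding has_val_def gdvd_def
  by (metis gauss_int_minus minus_divide_left mult_minus_right minus_minus)

lemma has_val_power: "has_val p m x \<Longrightarrow> has_val p (m * int n) (x ^ n)"
proof (induction n)
  case 0
  then show ?case
    using has_val_0_of_not_gdvd[of 1] gauss_prime_not_unit by simp
next
  case (Suc n)
  then show ?case
    using has_val_mult[of m x "m * int n" "x ^ n"] by (simp add: algebra_simps)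
qed

lemma has_val_powi: "has_val p m x \<Longrightarrow> has_val p (m * t) (x powi t)"
  using has_val_power[of m x "nat t"] has_val_inverse[OF has_val_power[of m x "nat (- t)"]]
  by (cases "t \<ge> 0") (simp_all add: power_int_def power_inverse)

lemma has_val_exists_gauss_int: "gauss_int z \<Longrightarrow> z \<noteq> 0 \<Longrightarrow> \<exists>m\<ge>0. has_val p m z"
proof (induction "nat \<lfloor>gauss_norm z\<rfloor>" arbitrary: z rule: less_induct)
  case less
  show ?case
  proof (cases "gdvd p z")
    case False
    then show ?thesis
      using has_val_0_of_not_gdvd less.prems by blast
  next
    case True
    then obtain c where c: "gauss_int c" "c \<noteq> 0" "z = p * c"
      using less.prems unfolding gdvd_def by auto
    have "gauss_norm z \<ge> 2 * gauss_norm c"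
      using c gauss_norm_prime_ge_2[OF p] gauss_norm_nonneg[of c]
      by (simp add: gauss_norm_mult mult_right_mono)
    moreover have "gauss_norm c \<ge> 1"
      using c gauss_norm_ge_1 by simp
    moreover obtain nc nz :: nat where "gauss_norm c = nc" "gauss_norm z = nz"
      using gauss_norm_of_nat c(1) less.prems(1) by metis
    ultimately have "nat \<lfloor>gauss_norm c\<rfloor> < nat \<lfloor>gauss_norm z\<rfloor>"
      by simp
    then obtain m where "m \<ge> 0" "has_val p m c"
      using less.hyps c by blast
    moreover have "has_val p 1 p"
      using gauss_prime_not_unit gauss_prime_gauss_int by (intro has_valI[of 1 1]) auto
    ultimately show ?thesis
      using has_val_mult c(3) by (metis add_nonneg_nonneg zero_le_one)
  qed
qed

lemma has_val_exists: "gauss_rat x \<Longrightarrow> x \<noteq> 0 \<Longrightarrow> \<exists>m. has_val p m x"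
proof -
  assume "gauss_rat x" "x \<noteq> 0"
  then obtain n :: int where n: "n > 0" "gauss_int (of_int n * x)"
    using gauss_rat_imp_gauss_int_multiple by blast
  obtain m1 where "has_val p m1 (of_int n * x)"
    using has_val_exists_gauss_int n \<open>x \<noteq> 0\<close> by fastforce
  moreover obtain m2 where "has_val p m2 (of_int n)"
    using has_val_exists_gauss_int[of "of_int n"] n by fastforce
  ultimately have "has_val p (m1 - m2) (of_int n * x / of_int n)"
    by (rule has_val_divide)
  then show ?thesis
    using n by auto
qed

lemma gauss_val_eqI: "has_val p m x \<Longrightarrow> gauss_val p x = m"
  unfolding gauss_val_def has_val_def[symmetric] by (rule the_equality) (auto dest: has_val_unique)

lemma padic_abs_le: "gauss_rat x \<Longrightarrow> val_ge p m x \<Longrightarrow> padic_abs p x \<le> gauss_norm p powr - real_of_int m"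
proof (cases "x = 0")
  case False
  assume "gauss_rat x" "val_ge p m x"
  then obtain n where n: "has_val p n x" "m \<le> n"
    using has_val_exists False has_val_le by blast
  then have "padic_abs p x = gauss_norm p powr - real_of_int n"
    using False gauss_val_eqI by (simp add: padic_abs_def gauss_norm_def)
  also have "\<dots> \<le> gauss_norm p powr - real_of_int m"
    using n gauss_norm_prime_ge_2[OF p] by (intro powr_mono) auto
  finally show ?thesis .
qed (simp add: padic_abs_def)

lemma val_ge_if_padic_abs_less: "gauss_rat x \<Longrightarrow> padic_abs p x < gauss_norm p powr - real_of_int m \<Longrightarrow> val_ge p m x"
proof (cases "x = 0")
  case False
  assume "gauss_rat x" and small: "padic_abs p x < gauss_norm p powr - real_of_int m"
  then obtain n where n: "has_val p n x"
    using has_val_exists False by blast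
  then have "padic_abs p x = gauss_norm p powr - real_of_int n"
    using False gauss_val_eqI by (simp add: padic_abs_def gauss_norm_def)
  then have "gauss_norm p powr - real_of_int n < gauss_norm p powr - real_of_int m"
    using small by simp
  then have "m \<le> n"
    using gauss_norm_prime_ge_2[OF p] by (simp add: powr_less_cancel_iff)
  then show ?thesis
    using val_ge_mono has_val_imp_val_ge[OF n] by blast
qed simp

end

lemma tendsto_powr_linear_at_bot:
  fixes c e b :: real
  assumes c: "c > 1" and e: "e > 0"
  shows "((\<lambda>l::int. c powr (e * of_int l + b)) \<longlongrightarrow> 0) at_bot"
proof (rule order_tendstoI)
  fix a :: real
  assume "a < 0"
  then show "\<forall>\<^sub>F l in at_bot. a < c powr (e * of_int l + b)"
    by (simp add: less_le_trans)
next
  fix a :: real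
  assume a: "a > 0"
  have "c powr (e * of_int l + b) < a" if l: "l \<le> \<lfloor>(log c a - b) / e\<rfloor> - 1" for l
  proof -
    have "of_int l < (log c a - b) / e"
      using l by linarith
    then have "e * of_int l + b < log c a"
      using e by (simp add: field_simps)
    then have "c powr (e * of_int l + b) < c powr (log c a)"
      using c by simp
    then show ?thesis
      using a c by simp
  qed
  then show "\<forall>\<^sub>F l in at_bot. c powr (e * of_int l + b) < a"
    unfolding eventually_at_bot_linorder by blast
qed

lemma exists_gauss_prime_not_val_ge_0:
  fixes r :: rat
  assumes "r \<notin> \<int>"
  obtains p where "gauss_prime p" "\<not> val_ge p 0 (of_rat r)"
proof -
  obtain a b where ab: "quotient_of r = (a, b)"
    by (cases "quotient_of r") auto
  have b: "b > 0" "coprime a b" "r = of_int a / of_int b"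
    using quotient_of_denom_pos[OF ab] quotient_of_coprime[OF ab] quotient_of_div[OF ab] by auto
  then have "b \<ge> 2"
    using assms by (cases "b = 1") auto
  then have "gauss_norm (of_int b) > 1"
    by (simp add: gauss_norm_def power2_eq_square less_le_trans[OF _ mult_mono[of 2 _ 2]])
  then obtain p where p: "gauss_prime p" "gdvd p (of_int b)"
    using gauss_prime_divisor_exists[of "of_int b"] by auto
  have "\<not> gdvd p (of_int a)"
    using gdvd_of_int_gcd[of p a b] p b(2) gauss_prime_not_unit[OF p(1)] by force
  then have "has_val p 0 (of_int a)"
    using has_val_0_of_not_gdvd[OF p(1)] by simp
  moreover obtain m where m: "has_val p m (of_int b)"
    using has_val_exists_gauss_int[OF p(1), of "of_int b"] b by auto
  ultimately have "has_val p (0 - m) (of_int a / of_int b)"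
    by (rule has_val_divide[OF p(1)])
  then have "has_val p (- m) (of_rat r)"
    using b(3) by (simp add: of_rat_divide)
  moreover have "m \<ge> 1"
    using has_val_le[OF p(1) m] val_ge_1_iff_gdvd[OF p(1)] p(2) by simp
  ultimately have "\<not> val_ge p 0 (of_rat r)"
    using has_val_le[OF p(1)] by fastforce
  then show ?thesis
    using that p(1) by blast
qed

lemma val_ge_0_Zring: "gauss_prime p \<Longrightarrow> val_ge p 0 a \<Longrightarrow> z \<in> Zring a \<Longrightarrow> val_ge p 0 z"
  unfolding Zring_def using val_ge_power[of p 0 a] by (auto intro!: val_ge_sum val_ge_mult[of p 0, simplified])

lemma not_val_ge_0_root:
  assumes p: "gauss_prime p" and "gdvd p (of_int a1)" "gdvd p (of_int a2)" "\<not> gdvd p (of_int a0)"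
    and root: "of_int a2 * x\<^sup>2 + of_int a1 * x + of_int a0 = 0"
  shows "\<not> val_ge p 0 x"
proof
  assume x: "val_ge p 0 x"
  have "val_ge p 1 (of_int a1)" "val_ge p 1 (of_int a2)"
    using assms val_ge_1_iff_gdvd[OF p] by simp_all
  then have "val_ge p 1 (of_int a2 * (x * x))" "val_ge p 1 (of_int a1 * x)"
    using val_ge_mult[OF p _ val_ge_mult[OF p x x]] val_ge_mult[OF p _ x] by simp_all
  then have "val_ge p 1 (- (of_int a2 * (x * x) + of_int a1 * x))"
    by (simp add: val_ge_add[OF p] val_ge_uminus[OF p] del: minus_add_distrib)
  moreover have "- (of_int a2 * (x * x) + of_int a1 * x) = of_int a0"
    using root by (simp add: power2_eq_square algebra_simps add_eq_0_iff2)
  ultimately show False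
    using assms val_ge_1_iff_gdvd[OF p] by simp
qed

section \<open>Integer parts of a digit expansion\<close>

primrec int_part :: "complex \<Rightarrow> (int \<Rightarrow> int) \<Rightarrow> int \<Rightarrow> nat \<Rightarrow> complex" where
  "int_part a d k 0 = of_int (d k)"
| "int_part a d k (Suc N) = a * int_part a d k N + of_int (d (k - int N - 1))"

lemma int_part_eq_sum:
  assumes "a \<noteq> 0"
  shows "(\<Sum>j\<in>{k - int N..k}. of_int (d j) * a powi (j - (k - int N))) = int_part a d k N"
proof (induction N)
  case 0
  then show ?case
    by simp
next
  case (Suc N)
  have "{k - int (Suc N)..k} = insert (k - int N - 1) {k - int N..k}"
    by auto
  then have "(\<Sum>j\<in>{k - int (Suc N)..k}. of_int (d j) * a powi (j - (k - int (Suc N))))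
      = of_int (d (k - int N - 1)) + (\<Sum>j\<in>{k - int N..k}. of_int (d j) * a powi (j - (k - int N) + 1))"
    by (simp add: algebra_simps)
  also have "\<dots> = of_int (d (k - int N - 1)) + a * (\<Sum>j\<in>{k - int N..k}. of_int (d j) * a powi (j - (k - int N)))"
    unfolding sum_distrib_left using assms by (intro arg_cong2[where f = "(+)"] sum.cong) (auto simp: power_int_add_1)
  finally show ?case
    using Suc by simp
qed

lemma all_int_parts_iff:
  assumes "a \<noteq> 0"
  shows "(\<forall>l\<le>k. P (\<Sum>j\<in>{l..k}. of_int (d j) * a powi (j - l))) \<longleftrightarrow> (\<forall>N. P (int_part a d k N))"
proof (intro iffI allI impI)
  fix N
  assume "\<forall>l\<le>k. P (\<Sum>j\<in>{l..k}. of_int (d j) * a powi (j - l))"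
  moreover have "k - int N \<le> k"
    by simp
  ultimately have "P (\<Sum>j\<in>{k - int N..k}. of_int (d j) * a powi (j - (k - int N)))"
    by blast
  then show "P (int_part a d k N)"
    by (simp only: int_part_eq_sum[OF assms])
next
  fix l
  assume "\<forall>N. P (int_part a d k N)" and "l \<le> k"
  moreover have "l = k - int (nat (k - l))"
    using \<open>l \<le> k\<close> by simp
  ultimately show "P (\<Sum>j\<in>{l..k}. of_int (d j) * a powi (j - l))"
    using int_part_eq_sum[OF assms, where k = k and N = "nat (k - l)" and d = d] by metis
qed

lemma digit_sum_eq_int_part:
  assumes "a \<noteq> 0"
  shows "(\<Sum>j\<in>{k - int N..k}. of_int (d j) * a powi j) = a powi (k - int N) * int_part a d k N"
proof -
  have "of_int (d j) * a powi j = a powi (k - int N) * (of_int (d j) * a powi (j - (k - int N)))" for j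
    using assms by (simp add: mult.left_commute power_int_add[symmetric])
  then show ?thesis
    unfolding int_part_eq_sum[OF assms, symmetric] sum_distrib_left by (rule sum.cong[OF refl])
qed

lemma int_part_Zring: "int_part a d k N \<in> Zring a"
proof (induction N)
  case 0
  show ?case
    unfolding Zring_def by (auto intro!: exI[of _ "\<lambda>i. d k"] exI[of _ 1])
next
  case (Suc N)
  then obtain c n where c: "int_part a d k N = (\<Sum>i<n. of_int (c i) * a ^ i)"
    unfolding Zring_def by auto
  define c' where "c' = case_nat (d (k - int N - 1)) c"
  have "(\<Sum>i<Suc n. of_int (c' i) * a ^ i) = of_int (d (k - int N - 1)) + a * (\<Sum>i<n. of_int (c i) * a ^ i)"
    unfolding sum.lessThan_Suc_shift c'_def by (simp add: sum_distrib_left algebra_simps)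
  then have "int_part a d k (Suc N) = (\<Sum>i<Suc n. of_int (c' i) * a ^ i)"
    using c by (simp add: add.commute)
  then show ?case
    unfolding Zring_def by blast
qed

locale quadratic_digits =
  fixes \<alpha> :: complex and a0 a1 a2 :: int and d :: "int \<Rightarrow> int" and k :: int
  assumes a2_nonzero: "a2 \<noteq> 0"
    and alpha_nonzero: "\<alpha> \<noteq> 0"
    and root: "of_int a2 * \<alpha>\<^sup>2 + of_int a1 * \<alpha> + of_int a0 = 0"
begin

abbreviation Y :: "nat \<Rightarrow> complex" where
  "Y \<equiv> int_part \<alpha> d k"

abbreviation digit_tail :: "int \<Rightarrow> complex" where
  "digit_tail l \<equiv> \<Sum>j\<in>{l..k}. of_int (d j) * \<alpha> powi j"

text \<open>The coordinates of \<open>Y N\<close> with respect to \<open>a2\<close> and \<open>a1 + a2 \<alpha>\<close>;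
  the recurrence is the Horner step of \<open>Y\<close> rewritten with \<open>a2 \<alpha>\<^sup>2 = - a1 \<alpha> - a0\<close>.\<close>
fun coord :: "nat \<Rightarrow> rat" where
  "coord 0 = 0"
| "coord (Suc 0) = of_int (d k) / of_int a2"
| "coord (Suc (Suc n)) =
     (of_int (d (k - int n - 1)) - of_int a1 * coord (Suc n) - of_int a0 * coord n) / of_int a2"

abbreviation W :: "nat \<Rightarrow> complex" where
  "W n \<equiv> of_rat (coord n)"

declare coord.simps(3) [simp del]

lemma coord_Suc_Suc:
  "of_int a2 * W (Suc (Suc n)) = of_int (d (k - int n - 1)) - of_int a1 * W (Suc n) - of_int a0 * W n"
  using a2_nonzero by (simp add: coord.simps(3) of_rat_divide of_rat_diff of_rat_mult)

lemma coord_1: "of_int a2 * W (Suc 0) = of_int (d k)"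
  using a2_nonzero by (simp add: of_rat_divide)

lemma a2_alpha_sq_eq: "of_int a2 * \<alpha>\<^sup>2 + of_int a1 * \<alpha> = - of_int a0"
  using root by (simp add: eq_neg_iff_add_eq_0)

lemma a2_alpha_eq: "of_int a2 * \<alpha> = - of_int a1 - of_int a0 * inverse \<alpha>"
proof -
  have "of_int a2 * \<alpha> = (of_int a2 * \<alpha>\<^sup>2 + of_int a1 * \<alpha> + of_int a0) / \<alpha> - of_int a1 - of_int a0 * inverse \<alpha>"
    using alpha_nonzero by (simp add: field_simps power2_eq_square)
  then show ?thesis
    using root by simp
qed

lemma int_part_eq_coords: "Y N = of_int a2 * W (Suc N) + (of_int a1 + of_int a2 * \<alpha>) * W N"
proof (induction N)
  case 0
  show ?case
    using coord_1 by simp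
next
  case (Suc N)
  have "Y (Suc N) = of_int a2 * \<alpha> * W (Suc N) + (of_int a2 * \<alpha>\<^sup>2 + of_int a1 * \<alpha>) * W N
      + of_int (d (k - int N - 1))"
    using Suc by (simp add: algebra_simps power2_eq_square)
  also have "of_int a2 * \<alpha>\<^sup>2 + of_int a1 * \<alpha> = - of_int a0"
    by (rule a2_alpha_sq_eq)
  also have "of_int (d (k - int N - 1)) = of_int a2 * W (Suc (Suc N)) + of_int a1 * W (Suc N) + of_int a0 * W N"
    unfolding coord_Suc_Suc by simp
  finally show ?case
    by (simp add: algebra_simps)
qed

lemma int_part_Suc_eq_coords:
  "Y (Suc N) = of_int a2 * \<alpha> * W (Suc N) + (of_int (d (k - int N - 1)) - of_int a0 * W N)"
proof -
  have "Y (Suc N) = of_int a2 * \<alpha> * W (Suc N) + (of_int a2 * \<alpha>\<^sup>2 + of_int a1 * \<alpha>) * W N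
      + of_int (d (k - int N - 1))"
    using int_part_eq_coords[of N] by (simp add: algebra_simps power2_eq_square)
  then show ?thesis
    unfolding a2_alpha_sq_eq by simp
qed

lemma int_part_Lambda:
  assumes ints: "\<And>n. coord n \<in> \<int>"
  shows "Y N \<in> Lambda \<alpha>"
proof -
  obtain w0 w1 where w: "coord N = of_int w0" "coord (Suc N) = of_int w1"
    using ints by (meson Ints_cases)
  have "\<alpha> * Y N = of_int a2 * \<alpha> * W (Suc N) + (of_int a2 * \<alpha>\<^sup>2 + of_int a1 * \<alpha>) * W N"
    unfolding int_part_eq_coords by (simp add: algebra_simps power2_eq_square)
  also have "\<dots> = (- of_int a1 - of_int a0 * inverse \<alpha>) * W (Suc N) - of_int a0 * W N"
    unfolding a2_alpha_sq_eq a2_alpha_eq by simp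
  also have "\<dots> = (\<Sum>i<2. of_int ([- a1 * w1 - a0 * w0, - a0 * w1] ! i) * inverse \<alpha> ^ i)"
    unfolding w by (simp add: numeral_2_eq_2 algebra_simps)
  finally have "\<alpha> * Y N = (\<Sum>i<2. of_int ([- a1 * w1 - a0 * w0, - a0 * w1] ! i) * inverse \<alpha> ^ i)" .
  then have "Y N = inverse \<alpha> * (\<Sum>i<2. of_int ([- a1 * w1 - a0 * w0, - a0 * w1] ! i) * inverse \<alpha> ^ i)"
    using alpha_nonzero by (simp add: field_simps)
  then have "Y N \<in> (\<lambda>z. inverse \<alpha> * z) ` Zring (inverse \<alpha>)"
    unfolding Zring_def by blast
  then show ?thesis
    unfolding Lambda_def using int_part_Zring by blast
qed

lemma val_ge_coord_if_not_gdvd_a2: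
  assumes p: "gauss_prime p" and a2: "\<not> gdvd p (of_int a2)"
  shows "val_ge p 0 (W n)"
proof -
  have a2_val: "has_val p 0 (of_int a2)"
    using has_val_0_of_not_gdvd[OF p _ a2] by simp
  have "val_ge p 0 (W n) \<and> val_ge p 0 (W (Suc n))"
  proof (induction n)
    case 0
    have "val_ge p (0 - 0) (of_int (d k) / of_int a2)"
      by (rule val_ge_divide[OF p val_ge_of_int[OF p] a2_val])
    then show ?case
      using val_ge_0[OF p] by (simp add: of_rat_divide)
  next
    case (Suc n)
    have "val_ge p 0 (of_int (d (k - int n - 1)) - of_int a1 * W (Suc n) - of_int a0 * W n)"
      using Suc val_ge_mult[OF p val_ge_of_int[OF p]]
      by (metis add_0 val_ge_diff[OF p] val_ge_of_int[OF p])
    then have "val_ge p (0 - 0) (W (Suc (Suc n)))"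
      using val_ge_divide[OF p _ a2_val] coord_Suc_Suc[of n] a2_nonzero
      by (metis nonzero_mult_div_cancel_left of_int_eq_0_iff)
    then show ?case
      using Suc by simp
  qed
  then show ?thesis
    by blast
qed

lemma val_ge_coord_if_bounded_below:
  assumes p: "gauss_prime p" and "gdvd p (of_int a1)" "gdvd p (of_int a2)" "\<not> gdvd p (of_int a0)"
    and bound: "\<And>n. val_ge p (- c) (W n)"
  shows "val_ge p 0 (W n)"
proof -
  have a0_val: "has_val p 0 (of_int a0)"
    using has_val_0_of_not_gdvd[OF p] assms(4) by simp
  have a1: "val_ge p 1 (of_int a1)" and a2: "val_ge p 1 (of_int a2)"
    using assms(2,3) val_ge_1_iff_gdvd[OF p] by simp_all
  have backwards: "W n = (of_int (d (k - int n - 1)) - of_int a1 * W (Suc n) - of_int a2 * W (Suc (Suc n)))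
      / of_int a0" for n
    using coord_Suc_Suc[of n] has_val_nonzero[OF p a0_val] by (simp add: field_simps)
  txt \<open>Each use of the backward recurrence gains one factor \<open>p\<close>, until \<open>W n\<close> is \<open>p\<close>-integral.\<close>
  have "val_ge p (min 0 (int j - c)) (W n)" for j n
  proof (induction j arbitrary: n)
    case 0
    then show ?case
      using bound val_ge_mono[OF p] by (metis min.cobounded2 of_nat_0 diff_0)
  next
    case (Suc j)
    define t where "t = min 0 (int (Suc j) - c)"
    have "t \<le> 1 + min 0 (int j - c)"
      unfolding t_def by simp
    then have "val_ge p t (of_int a1 * W (Suc n))" "val_ge p t (of_int a2 * W (Suc (Suc n)))"
      using val_ge_mult[OF p a1 Suc] val_ge_mult[OF p a2 Suc] val_ge_mono[OF p] by blast+
    moreover have "val_ge p t (of_int (d (k - int n - 1)))"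
      using val_ge_mono[OF p _ val_ge_of_int[OF p]] t_def by simp
    ultimately have "val_ge p (t - 0) (W n)"
      unfolding backwards[of n] by (intro val_ge_divide[OF p _ a0_val] val_ge_diff[OF p])
    then show ?case
      unfolding t_def by simp
  qed
  from this[of "nat c"] show ?thesis
    by simp
qed

end

section \<open>Valuations of the integer parts\<close>

locale gauss_quadratic = quadratic_digits +
  fixes num den :: complex
  assumes alpha_gauss_rat: "gauss_rat \<alpha>" and alpha_not_real: "Im \<alpha> \<noteq> 0"
    and coeffs_coprime: "gcd (gcd a0 a1) a2 = 1"
    and num: "gauss_int num" and den: "gauss_int den" and alpha_eq: "\<alpha> = num / den"
    and num_den_coprime: "\<forall>p. gauss_prime p \<longrightarrow> \<not> (gdvd p num \<and> gdvd p den)"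
begin

lemma den_nonzero: "den \<noteq> 0"
  using alpha_nonzero alpha_eq by auto

lemma gauss_rat_digit_tail: "gauss_rat (digit_tail l)"
  by (simp add: alpha_gauss_rat gauss_rat_sum)

lemma cnj_root: "of_int a2 * (cnj \<alpha>)\<^sup>2 + of_int a1 * cnj \<alpha> + of_int a0 = 0"
  using arg_cong[OF root, of cnj] by simp

lemma alpha_diff_cnj_nonzero: "\<alpha> - cnj \<alpha> \<noteq> 0"
  using alpha_not_real by (simp add: complex_diff_cnj)

lemma root_sum: "of_int a2 * (\<alpha> + cnj \<alpha>) = - of_int a1"
proof -
  have "(\<alpha> - cnj \<alpha>) * (of_int a2 * (\<alpha> + cnj \<alpha>) + of_int a1) =
      (of_int a2 * \<alpha>\<^sup>2 + of_int a1 * \<alpha> + of_int a0) - (of_int a2 * (cnj \<alpha>)\<^sup>2 + of_int a1 * cnj \<alpha> + of_int a0)"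
    by (simp add: algebra_simps power2_eq_square)
  then show ?thesis
    using root cnj_root alpha_diff_cnj_nonzero by (simp add: eq_neg_iff_add_eq_0)
qed

lemma not_gdvd_a0:
  assumes p: "gauss_prime p" and "gdvd p (of_int a1)" "gdvd p (of_int a2)"
  shows "\<not> gdvd p (of_int a0)"
  using gdvd_of_int_gcd[OF gdvd_of_int_gcd] assms coeffs_coprime gauss_prime_not_unit[OF p]
  by fastforce

lemma val_ge_alpha_if_not_gdvd_den: "gauss_prime q \<Longrightarrow> \<not> gdvd q den \<Longrightarrow> val_ge q 0 \<alpha>"
  using val_ge_divide[OF _ val_ge_0_gauss_int[OF _ num] has_val_0_of_not_gdvd[OF _ den]] alpha_eq
  by fastforce

lemma has_val_den_exists: "gauss_prime q \<Longrightarrow> \<exists>e. has_val q e den"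
  using has_val_exists_gauss_int[OF _ den den_nonzero] by blast

context
  fixes q e
  assumes q: "gauss_prime q" and q_den: "gdvd q den" and e: "has_val q e den"
begin

lemma den_val_pos: "e \<ge> 1"
  using has_val_le[OF q e] val_ge_1_iff_gdvd[OF q den] q_den by simp

lemma has_val_alpha: "has_val q (- e) \<alpha>"
proof -
  have "has_val q 0 num"
    using num_den_coprime q q_den has_val_0_of_not_gdvd[OF q num] by blast
  then show ?thesis
    using has_val_divide[OF q _ e] alpha_eq by fastforce
qed

lemma has_val_inverse_alpha: "has_val q e (inverse \<alpha>)"
  using has_val_inverse[OF q has_val_alpha] by simp

lemma has_val_a2_if_not_gdvd_a1:
  assumes a1: "\<not> gdvd q (of_int a1)"
  shows "has_val q e (of_int a2)"
proof -
  have "of_int a2 = (of_int a2 * \<alpha>) * inverse \<alpha>"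
    using alpha_nonzero by simp
  also have "\<dots> = - (of_int a1 * inverse \<alpha>) + - (of_int a0 * inverse \<alpha> ^ 2)"
    unfolding a2_alpha_eq by (simp add: algebra_simps power2_eq_square)
  finally have a2_eq: "of_int a2 = - (of_int a1 * inverse \<alpha>) + - (of_int a0 * inverse \<alpha> ^ 2)" .
  have a1_term: "has_val q e (of_int a1 * inverse \<alpha>)"
    using has_val_mult[OF q has_val_0_of_not_gdvd[OF q _ a1] has_val_inverse_alpha] by simp
  have "val_ge q (0 + e * int 2) (of_int a0 * inverse \<alpha> ^ 2)"
    using val_ge_mult[OF q val_ge_of_int[OF q] has_val_imp_val_ge[OF has_val_power[OF q has_val_inverse_alpha]]] .
  then have a0_term: "val_ge q (e + 1) (of_int a0 * inverse \<alpha> ^ 2)"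
    using val_ge_mono[OF q, of "e + 1" "e * 2"] den_val_pos by simp
  show ?thesis
    unfolding a2_eq by (rule has_val_add_val_ge[OF q has_val_uminus[OF q a1_term] val_ge_uminus[OF q a0_term]])
qed

text \<open>At the first index where \<open>W\<close> has a pole at \<open>q\<close>, the pole grows by \<open>e\<close> in the next
  coordinate (the term \<open>a1 W (Suc n)\<close> dominates the recurrence) and then shows up in \<open>Y\<close>.\<close>
lemma has_val_coord_after_first_pole:
  assumes a1: "\<not> gdvd q (of_int a1)" and pole: "has_val q m (W (Suc n))" "m < 0"
    and prev: "val_ge q 0 (W n)"
  shows "has_val q (m - e) (W (Suc (Suc n)))"
proof -
  have rec: "of_int a2 * W (Suc (Suc n)) = - (of_int a1 * W (Suc n)) + (of_int (d (k - int n - 1)) - of_int a0 * W n)"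
    using coord_Suc_Suc[of n] by simp
  have pole_term: "has_val q m (- (of_int a1 * W (Suc n)))"
    using has_val_uminus[OF q has_val_mult[OF q has_val_0_of_not_gdvd[OF q _ a1] pole(1)]] by simp
  have "val_ge q 0 (of_int a0 * W n)"
    using val_ge_mult[OF q val_ge_of_int[OF q] prev] by simp
  then have "val_ge q 0 (of_int (d (k - int n - 1)) - of_int a0 * W n)"
    using val_ge_diff[OF q val_ge_of_int[OF q]] by blast
  then have "val_ge q (m + 1) (of_int (d (k - int n - 1)) - of_int a0 * W n)"
    using val_ge_mono[OF q, of "m + 1" 0] pole(2) by simp
  then have "has_val q m (of_int a2 * W (Suc (Suc n)))"
    unfolding rec by (rule has_val_add_val_ge[OF q pole_term])
  then have "has_val q (m - e) (of_int a2 * W (Suc (Suc n)) / of_int a2)"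
    using has_val_divide[OF q _ has_val_a2_if_not_gdvd_a1[OF a1]] by blast
  then show ?thesis
    using a2_nonzero by simp
qed

lemma has_val_int_part_at_first_pole:
  assumes a1: "\<not> gdvd q (of_int a1)" and pole: "has_val q m (W (Suc n))" "m < 0"
    and prev: "val_ge q 0 (W n)"
  shows "has_val q (m - e) (Y (Suc (Suc n)))"
proof -
  have "has_val q (e + - e) (of_int a2 * \<alpha>)"
    using has_val_mult[OF q has_val_a2_if_not_gdvd_a1[OF a1] has_val_alpha] .
  from has_val_mult[OF q this has_val_coord_after_first_pole[OF assms]]
  have main: "has_val q (m - e) (of_int a2 * \<alpha> * W (Suc (Suc n)))"
    by simp
  have "val_ge q m (of_int a0 * W (Suc n))"
    using val_ge_mult[OF q val_ge_of_int[OF q] has_val_imp_val_ge[OF pole(1)]] by simp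
  moreover have "val_ge q m (of_int (d (k - int (Suc n) - 1)))"
    using val_ge_mono[OF q, of m 0] val_ge_of_int[OF q] pole(2) by simp
  ultimately have "val_ge q m (of_int (d (k - int (Suc n) - 1)) - of_int a0 * W (Suc n))"
    using val_ge_diff[OF q] by blast
  then have "val_ge q (m - e + 1) (of_int (d (k - int (Suc n) - 1)) - of_int a0 * W (Suc n))"
    using val_ge_mono[OF q, of "m - e + 1" m] den_val_pos by simp
  then show ?thesis
    unfolding int_part_Suc_eq_coords[of "Suc n"] by (rule has_val_add_val_ge[OF q main])
qed

lemma val_ge_int_part_if_Lambda: "Y N \<in> Lambda \<alpha> \<Longrightarrow> val_ge q e (Y N)"
proof -
  assume "Y N \<in> Lambda \<alpha>"
  then obtain z where z: "z \<in> Zring (inverse \<alpha>)" "Y N = inverse \<alpha> * z"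
    unfolding Lambda_def by auto
  have "val_ge q 0 (inverse \<alpha>)"
    using val_ge_mono[OF q _ has_val_imp_val_ge[OF has_val_inverse_alpha]] den_val_pos by simp
  then have "val_ge q (e + 0) (inverse \<alpha> * z)"
    using val_ge_mult[OF q has_val_imp_val_ge[OF has_val_inverse_alpha] val_ge_0_Zring[OF q _ z(1)]] by blast
  then show ?thesis
    using z(2) by simp
qed

lemma val_ge_digit_tail:
  assumes int_parts: "\<And>N. val_ge q e (Y N)"
  shows "val_ge q (e - e * l) (digit_tail l)"
proof (cases "l \<le> k")
  case True
  define N where "N = nat (k - l)"
  have l: "l = k - int N"
    using True unfolding N_def by simp
  have "val_ge q (- e * l + e) (\<alpha> powi l * Y N)"
    using val_ge_mult[OF q has_val_imp_val_ge[OF has_val_powi[OF q has_val_alpha]] int_parts] .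
  then show ?thesis
    unfolding l digit_sum_eq_int_part[OF alpha_nonzero] by (simp add: algebra_simps)
qed (simp add: val_ge_0[OF q])

lemma val_ge_int_part_if_digit_tail:
  assumes l: "l \<le> k - int N" and tail: "val_ge q (e * (int N - k + 1)) (digit_tail l)"
  shows "val_ge q e (Y N)"
proof -
  have e0: "e \<ge> 0"
    using den_val_pos by simp
  have "{l..k} = {l..<k - int N} \<union> {k - int N..k}"
    using l by auto
  then have split: "digit_tail (k - int N) = digit_tail l - (\<Sum>j\<in>{l..<k - int N}. of_int (d j) * \<alpha> powi j)"
    by (simp add: sum.union_disjoint ivl_disj_int_two)
  have "val_ge q (e * (int N - k + 1)) (of_int (d j) * \<alpha> powi j)" if "j < k - int N" for j
  proof -
    have "e * (int N - k + 1) \<le> - e * j"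
      using mult_left_mono[of "int N - k + 1" "- j" e] that e0 by simp
    then show ?thesis
      using val_ge_mult[OF q val_ge_of_int[OF q] has_val_imp_val_ge[OF has_val_powi[OF q has_val_alpha]]]
        val_ge_mono[OF q] by fastforce
  qed
  then have "val_ge q (e * (int N - k + 1)) (digit_tail (k - int N))"
    unfolding split using tail by (auto intro!: val_ge_diff[OF q] val_ge_sum[OF q])
  then have "val_ge q (- e * (int N - k) + e * (int N - k + 1)) (\<alpha> powi (int N - k) * digit_tail (k - int N))"
    by (rule val_ge_mult[OF q has_val_imp_val_ge[OF has_val_powi[OF q has_val_alpha]]])
  moreover have "\<alpha> powi (int N - k) * digit_tail (k - int N) = Y N"
    using alpha_nonzero by (simp add: digit_sum_eq_int_part power_int_add[symmetric])
  ultimately show ?thesis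
    by (simp add: algebra_simps)
qed

lemma tendsto_digit_tail_iff:
  "((\<lambda>l. padic_abs q (digit_tail l)) \<longlongrightarrow> 0) at_bot \<longleftrightarrow> (\<forall>N. val_ge q e (Y N))"
proof
  assume lim: "((\<lambda>l. padic_abs q (digit_tail l)) \<longlongrightarrow> 0) at_bot"
  show "\<forall>N. val_ge q e (Y N)"
  proof
    fix N
    define M where "M = e * (int N - k + 1)"
    have "gauss_norm q powr - real_of_int M > 0"
      using gauss_prime_nonzero[OF q] by simp
    then obtain L where "\<forall>l\<le>L. padic_abs q (digit_tail l) < gauss_norm q powr - real_of_int M"
      using order_tendstoD(2)[OF lim] unfolding eventually_at_bot_linorder by blast
    then have "val_ge q M (digit_tail (min L (k - int N)))"
      by (simp add: val_ge_if_padic_abs_less[OF q gauss_rat_digit_tail])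
    then show "val_ge q e (Y N)"
      unfolding M_def by (rule val_ge_int_part_if_digit_tail[rotated]) simp
  qed
next
  assume int_parts: "\<forall>N. val_ge q e (Y N)"
  have bound: "padic_abs q (digit_tail l) \<le> gauss_norm q powr (real_of_int e * of_int l + - real_of_int e)" for l
  proof -
    have "padic_abs q (digit_tail l) \<le> gauss_norm q powr - real_of_int (e - e * l)"
      using padic_abs_le[OF q gauss_rat_digit_tail val_ge_digit_tail] int_parts by blast
    also have "- real_of_int (e - e * l) = real_of_int e * of_int l + - real_of_int e"
      by (simp add: algebra_simps)
    finally show ?thesis .
  qed
  have lim: "((\<lambda>l. gauss_norm q powr (real_of_int e * of_int l + - real_of_int e)) \<longlongrightarrow> 0) at_bot"
    using gauss_norm_prime_ge_2[OF q] den_val_pos by (intro tendsto_powr_linear_at_bot) auto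
  show "((\<lambda>l. padic_abs q (digit_tail l)) \<longlongrightarrow> 0) at_bot"
  proof (rule tendsto_sandwich[OF _ _ tendsto_const lim])
    show "\<forall>\<^sub>F l in at_bot. 0 \<le> padic_abs q (digit_tail l)"
      by (simp add: padic_abs_def)
    show "\<forall>\<^sub>F l in at_bot. padic_abs q (digit_tail l) \<le> gauss_norm q powr (real_of_int e * of_int l + - real_of_int e)"
      using bound by (simp add: always_eventually)
  qed
qed

end

end

section \<open>Integrality of the coordinates\<close>

locale int_parts_den_divisible = gauss_quadratic +
  assumes int_part_val_ge: "\<And>q e N. gauss_prime q \<Longrightarrow> gdvd q den \<Longrightarrow> has_val q e den \<Longrightarrow> val_ge q e (Y N)"
begin

lemma val_ge_0_int_part: "gauss_prime q \<Longrightarrow> gdvd q den \<Longrightarrow> val_ge q 0 (Y N)"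
  using has_val_den_exists int_part_val_ge den_val_pos val_ge_mono by (metis zero_le_one order_trans)

lemma val_ge_coord_at_pole:
  assumes q: "gauss_prime q" and pole: "\<not> val_ge q 0 \<alpha>" and a1: "\<not> gdvd q (of_int a1)"
  shows "val_ge q 0 (W n)"
proof (rule ccontr)
  assume "\<not> val_ge q 0 (W n)"
  define n0 where "n0 = (LEAST n. \<not> val_ge q 0 (W n))"
  have n0: "\<not> val_ge q 0 (W n0)"
    unfolding n0_def by (rule LeastI) fact
  have before: "val_ge q 0 (W m)" if "m < n0" for m
    using not_less_Least[OF that[unfolded n0_def]] by blast
  have q_den: "gdvd q den"
    using val_ge_alpha_if_not_gdvd_den[OF q] pole by blast
  obtain e where e: "has_val q e den"
    using has_val_den_exists[OF q] by blast
  obtain m where m: "n0 = Suc m"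
    using n0 val_ge_0[OF q] by (cases n0) auto
  obtain v where v: "has_val q v (W n0)"
    using has_val_exists[OF q] n0 val_ge_0[OF q] by (metis gauss_rat_of_rat)
  have "v < 0"
    using n0 val_ge_mono[OF q, of 0 v] has_val_imp_val_ge[OF v] by (meson not_le)
  then have "has_val q (v - e) (Y (Suc (Suc m)))"
    using has_val_int_part_at_first_pole[OF q q_den e a1] v before m by simp
  then have "e \<le> v - e"
    using has_val_le[OF q] int_part_val_ge[OF q q_den e] by blast
  then show False
    using den_val_pos[OF q q_den e] \<open>v < 0\<close> by simp
qed

lemma val_ge_coord_at_common_divisor:
  assumes p: "gauss_prime p" and a1: "gdvd p (of_int a1)" and a2: "gdvd p (of_int a2)"
  shows "val_ge p 0 (W n)"
proof -
  have a0: "\<not> gdvd p (of_int a0)"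
    using not_gdvd_a0[OF p a1 a2] .
  have cnj_p: "gauss_prime (cnj p)"
    using gauss_prime_cnj[OF p] .
  have "\<not> val_ge p 0 \<alpha>" "\<not> val_ge (cnj p) 0 \<alpha>"
    using not_val_ge_0_root[OF p a1 a2 a0] root cnj_root val_ge_cnj_iff[of p 0 "cnj \<alpha>"] by auto
  then have p_den: "gdvd p den" and cnj_p_den: "gdvd (cnj p) den"
    using val_ge_alpha_if_not_gdvd_den p cnj_p by blast+
  define z where "z = of_int a2 * (\<alpha> - cnj \<alpha>)"
  have "z \<noteq> 0" "gauss_rat z"
    unfolding z_def using a2_nonzero alpha_diff_cnj_nonzero alpha_gauss_rat by simp_all
  then obtain c where c: "has_val p c z"
    using has_val_exists[OF p] by blast
  have "val_ge p (- c) (W N)" for N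
  proof -
    txt \<open>As \<open>W N\<close> is rational, \<open>Y N - cnj (Y N) = z * W N\<close>.\<close>
    have "W N = (Y N - cnj (Y N)) / z"
      using int_part_eq_coords[of N] \<open>z \<noteq> 0\<close> unfolding z_def by (simp add: field_simps)
    moreover have "val_ge p 0 (cnj (Y N))"
      using val_ge_0_int_part[OF cnj_p cnj_p_den] val_ge_cnj_iff[of p 0 "cnj (Y N)"] by simp
    ultimately show ?thesis
      using val_ge_divide[OF p val_ge_diff[OF p val_ge_0_int_part[OF p p_den]] c] by simp
  qed
  then show ?thesis
    by (rule val_ge_coord_if_bounded_below[OF p a1 a2 a0])
qed

lemma coord_Ints: "coord n \<in> \<int>"
proof (rule ccontr)
  assume "coord n \<notin> \<int>"
  then obtain p where p: "gauss_prime p" and not_int: "\<not> val_ge p 0 (W n)"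
    by (rule exists_gauss_prime_not_val_ge_0)
  have a2: "gdvd p (of_int a2)"
    using val_ge_coord_if_not_gdvd_a2[OF p] not_int by blast
  have a1: "\<not> gdvd p (of_int a1)"
    using val_ge_coord_at_common_divisor[OF p _ a2] not_int by blast
  have "\<not> val_ge p 0 \<alpha> \<or> \<not> val_ge p 0 (cnj \<alpha>)"
  proof (rule ccontr)
    assume "\<not> ?thesis"
    then have "val_ge p 0 (\<alpha> + cnj \<alpha>)"
      using val_ge_add[OF p] by blast
    moreover have "val_ge p 1 (of_int a2)"
      using val_ge_1_iff_gdvd[OF p] a2 by simp
    ultimately have "val_ge p (1 + 0) (of_int a2 * (\<alpha> + cnj \<alpha>))"
      using val_ge_mult[OF p] by blast
    then have "val_ge p 1 (of_int a1)"
      using val_ge_uminus[OF p] root_sum by fastforce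
    then show False
      using a1 val_ge_1_iff_gdvd[OF p] by simp
  qed
  then show False
  proof
    assume "\<not> val_ge p 0 \<alpha>"
    then show False
      using val_ge_coord_at_pole[OF p _ a1] not_int by blast
  next
    assume "\<not> val_ge p 0 (cnj \<alpha>)"
    then have "val_ge (cnj p) 0 (W n)"
      using val_ge_coord_at_pole[OF gauss_prime_cnj[OF p]] a1 val_ge_cnj_iff[of p 0 "cnj \<alpha>"]
        gdvd_cnj_iff[of p "of_int a1"] by simp
    then show False
      using not_int val_ge_cnj_iff[of p 0 "W n"] by simp
  qed
qed

end

context gauss_quadratic
begin

lemma int_parts_Lambda_iff:
  "(\<forall>N. Y N \<in> Lambda \<alpha>) \<longleftrightarrow>
     (\<forall>q e N. gauss_prime q \<longrightarrow> gdvd q den \<longrightarrow> has_val q e den \<longrightarrow> val_ge q e (Y N))"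
proof
  assume "\<forall>N. Y N \<in> Lambda \<alpha>"
  then show "\<forall>q e N. gauss_prime q \<longrightarrow> gdvd q den \<longrightarrow> has_val q e den \<longrightarrow> val_ge q e (Y N)"
    using val_ge_int_part_if_Lambda by blast
next
  assume "\<forall>q e N. gauss_prime q \<longrightarrow> gdvd q den \<longrightarrow> has_val q e den \<longrightarrow> val_ge q e (Y N)"
  then interpret int_parts_den_divisible \<alpha> a0 a1 a2 d k num den
    by unfold_locales blast
  show "\<forall>N. Y N \<in> Lambda \<alpha>"
    using int_part_Lambda coord_Ints by blast
qed

lemma tendsto_digit_tail_iff_int_parts:
  assumes p: "gauss_prime p" and p_den: "gdvd p den"
  shows "((\<lambda>l. padic_abs p (digit_tail l)) \<longlongrightarrow> 0) at_bot \<longleftrightarrow>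
    (\<forall>e N. has_val p e den \<longrightarrow> val_ge p e (Y N))"
proof -
  obtain e where e: "has_val p e den"
    using has_val_den_exists[OF p] by blast
  then have "(\<forall>e' N. has_val p e' den \<longrightarrow> val_ge p e' (Y N)) \<longleftrightarrow> (\<forall>N. val_ge p e (Y N))"
    using has_val_unique[OF p] by blast
  then show ?thesis
    using tendsto_digit_tail_iff[OF p p_den e] by simp
qed

lemma Lambda_iff_tendsto_digit_tail:
  "(\<forall>l\<le>k. (\<Sum>j\<in>{l..k}. of_int (d j) * \<alpha> powi (j - l)) \<in> Lambda \<alpha>) \<longleftrightarrow>
     (\<forall>p. gauss_prime p \<and> gdvd p den \<longrightarrow> ((\<lambda>l. padic_abs p (digit_tail l)) \<longlongrightarrow> 0) at_bot)"
proof -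
  have "(\<forall>l\<le>k. (\<Sum>j\<in>{l..k}. of_int (d j) * \<alpha> powi (j - l)) \<in> Lambda \<alpha>) \<longleftrightarrow> (\<forall>N. Y N \<in> Lambda \<alpha>)"
    by (rule all_int_parts_iff[OF alpha_nonzero])
  also have "\<dots> \<longleftrightarrow> (\<forall>q e N. gauss_prime q \<longrightarrow> gdvd q den \<longrightarrow> has_val q e den \<longrightarrow> val_ge q e (Y N))"
    by (rule int_parts_Lambda_iff)
  also have "\<dots> \<longleftrightarrow> (\<forall>p. gauss_prime p \<and> gdvd p den \<longrightarrow> ((\<lambda>l. padic_abs p (digit_tail l)) \<longlongrightarrow> 0) at_bot)"
    using tendsto_digit_tail_iff_int_parts by blast
  finally show ?thesis .
qed

end

theorem mainTheorem11:
  fixes \<alpha> x num den :: complex and a0 a1 a2 k :: int and d :: "int \<Rightarrow> int"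
  assumes "gauss_rat \<alpha>" and "Im \<alpha> \<noteq> 0" and "cmod \<alpha> > 1"
    and "gcd (gcd a0 a1) a2 = 1" and "a2 > 0"
    and "of_int a2 * \<alpha>\<^sup>2 + of_int a1 * \<alpha> + of_int a0 = 0"
    and "gauss_int num" and "gauss_int den" and "\<alpha> = num / den"
    and "\<forall>p. gauss_prime p \<longrightarrow> \<not> (gdvd p num \<and> gdvd p den)"
    and "\<forall>j\<le>k. d j \<in> {0..\<bar>a0\<bar> - 1}" and "d k \<noteq> 0"
    and "(\<lambda>n::nat. of_int (d (k - int n)) * \<alpha> powi (k - int n)) sums x"
  shows "alpha_expansion \<alpha> {0..\<bar>a0\<bar> - 1} d k x \<longleftrightarrow>
     (\<forall>p. gauss_prime p \<and> gdvd p den \<longrightarrow>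
        ((\<lambda>l. padic_abs p (\<Sum>j\<in>{l..k}. of_int (d j) * \<alpha> powi j)) \<longlongrightarrow> 0) at_bot)"
proof -
  interpret gauss_quadratic \<alpha> a0 a1 a2 d k num den
    using assms(1-10) by unfold_locales auto
  show ?thesis
    unfolding alpha_expansion_def using Lambda_iff_tendsto_digit_tail assms(11-13) by blast
qed

end
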